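(* Let $\mathcal H$ be a functional unit for $\mathbb S$ with $(\mathrm{dup},\mathrm{Dup})\in\mathcal H$, let $I\subseteq IF(\mathcal H)$ with $\mathrm{dup}\in I$, and let $x\in\mathcal L_f(IF(\mathcal H))$ be a reflexive interpreter for $\mathcal L_f(I)$ with respect to $\mathcal H$. Then there exist $y\in\mathcal L_f(I)$ and $v\in\{0,1,:\}^*$ such that $x\uparrow\mathcal H(\triangleright\overline{y}:v)$.
   Context: Instruction sequences: Fix a symbol $f$ (the focus). For a set $I$ of method names, $\mathcal L_f(I)$ is the set of all finite sequences $u_1;\ldots;u_k$ ($k\ge1$) of primitive instructions, each of which is one of: $f.m$, $+f.m$, $-f.m$ with $m\in I$ (plain basic, positive test, negative test instruction); $\#l$ or $\backslash\#l$ with $l\in\mathbb N$ (forward / backward jump); $!t$ (positive termination); $!f$ (negative termination). Functional units: for a nonempty set $S$, a method operation on $S$ is a total function $M:S\to\{T,F\}\times S$. A functional unit for $S$ is a finite set $\mathcal H$ of pairs $(m,M)$ ($m$ a method name, $M$ a method operation on $S$) in which each method name occurs at most once; $IF(\mathcal H)$ is the set of method names occurring in $\mathcal H$, and $m_{\mathcal H}$ is the method operation paired with $m\in IF(\mathcal H)$. Execution: for $x=u_1;\ldots;u_k$, a functional unit $\mathcal H$ for $S$ and $s\in S$, the execution of $x$ on $\mathcal H(s)$ is the deterministic run through configurations $(i,t)$ (instruction position, current state) starting at $(1,s)$: if $i\notin\{1,\ldots,k\}$ the run stops without terminating (deadlock); if $u_i$ is $f.m$, $+f.m$ or $-f.m$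 with $m\notin IF(\mathcal H)$ the run stops without terminating; otherwise, with $(b,t')=m_{\mathcal H}(t)$: $u_i=f.m$ leads to $(i+1,t')$; $u_i=+f.m$ leads to $(i+1,t')$ if $b=T$ and to $(i+2,t')$ if $b=F$; $u_i=-f.m$ leads to $(i+2,t')$ if $b=T$ and to $(i+1,t')$ if $b=F$; $u_i=\#l$ leads to $(i+l,t)$; $u_i=\backslash\#l$ leads to $(i-l,t)$; $u_i=!t$ (resp. $!f$) makes the run terminate with value $T$ (resp. $F$) and final state $t$. We say $x$ converges on $\mathcal H(s)$, written $x\downarrow\mathcal H(s)$, if the run reaches $!t$ or $!f$ after finitely many steps; otherwise $x$ diverges on $\mathcal H(s)$, written $x\uparrow\mathcal H(s)$. The reply $\mathrm{rep}(x,\mathcal H(s))\in\{T,F,D\}$ is the termination value if $x\downarrow\mathcal H(s)$ and $D$ (divergent) otherwise; if $x\downarrow\mathcal H(s)$, $\mathrm{fin}(x,\mathcal H(s))$ denotes the final state. Tape states: $\mathbb S=\{v\triangleright w : v,w\in\{0,1,:\}^*\}$, formal pairs of strings over the alphabet $\{0,1,:\}$ (':' is the colon symbol, $\triangleright$ marks the head position); $\triangleright w$ denotes the state with empty left part and right part $w$, and juxtaposition denotes concatenation, so e.g. $\triangleright v:w$ has right part $v$, then a colon, then $w$. For each functional unit $\mathcal H$ for $\mathbb S$ a fixed injective encoding $x\mapsto\overline x$ from $\mathcal L_f(IF(\mathcal H))$ into $\{0,1\}^*$ is given. Duplication: $\mathrm{dup}$ is a method name and $\mathrm{Dup}$ is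 the method operation on $\mathbb S$ given by $\mathrm{Dup}(v\triangleright w)=\mathrm{Dup}(\triangleright vw)$; $\mathrm{Dup}(\triangleright v)=(T,\triangleright v:v)$ for $v\in\{0,1\}^*$; $\mathrm{Dup}(\triangleright v:w)=(T,\triangleright v:v:w)$ for $v\in\{0,1\}^*$, $w\in\{0,1,:\}^*$. Interpreters: let $\mathcal H$ be a functional unit for $\mathbb S$, $I\subseteq IF(\mathcal H)$, $I'\subseteq I$. Then $x\in\mathcal L_f(I)$ is an interpreter for $\mathcal L_f(I')$ with respect to $\mathcal H$ if for all $y\in\mathcal L_f(I')$ and $v\in\{0,1,:\}^*$ with $y\downarrow\mathcal H(\triangleright v)$: $x\downarrow\mathcal H(\triangleright\overline y:v)$, $\mathrm{fin}(x,\mathcal H(\triangleright\overline y:v))=\mathrm{fin}(y,\mathcal H(\triangleright v))$ and $\mathrm{rep}(x,\mathcal H(\triangleright\overline y:v))=\mathrm{rep}(y,\mathcal H(\triangleright v))$. It is a reflexive interpreter if moreover $x\in\mathcal L_f(I')$. (The paper applies this with $x\in\mathcal L_f(IF(\mathcal H))$, i.e. $I=IF(\mathcal H)$.) *)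

theory Defs
  imports Main
begin

section \<open>Instruction sequences (focus f fixed, hence omitted)\<close>

datatype 'm instr =
    Basic 'm
  | PosTest 'm
  | NegTest 'm
  | FJump nat
  | BJump nat
  | TermT
  | TermF

fun instr_methods :: "'m instr \<Rightarrow> 'm set" where
  "instr_methods (Basic m) = {m}"
| "instr_methods (PosTest m) = {m}"
| "instr_methods (NegTest m) = {m}"
| "instr_methods _ = {}"

definition Lf :: "'m set \<Rightarrow> 'm instr list set" where
  "Lf I = {xs. xs \<noteq> [] \<and> (\<forall>u\<in>set xs. instr_methods u \<subseteq> I)}"

text \<open>A functional unit for state set S (here the whole type 's): a finite set of
  (method name, method operation) pairs, each name occurring at most once.
  Method operations are total HOL functions.\<close>
definition functional_unit :: "('m \<times> ('s \<Rightarrow> bool \<times> 's)) set \<Rightarrow> bool" where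
  "functional_unit H \<longleftrightarrow> finite H \<and>
     (\<forall>m M M'. (m, M) \<in> H \<longrightarrow> (m, M') \<in> H \<longrightarrow> M = M')"

definition IF :: "('m \<times> ('s \<Rightarrow> bool \<times> 's)) set \<Rightarrow> 'm set" where
  "IF H = fst ` H"

definition meth :: "('m \<times> ('s \<Rightarrow> bool \<times> 's)) set \<Rightarrow> 'm \<Rightarrow> 's \<Rightarrow> bool \<times> 's" where
  "meth H m = (THE M. (m, M) \<in> H)"

datatype 's outcome = Cont nat 's | Done bool 's | Stuck

text \<open>One step from configuration (i, t); positions are 1-based. A backward jump
  beyond position 1 yields position 0 (nat subtraction), which is outside the
  sequence and hence deadlocks, as required.\<close>
definition step :: "'m instr list \<Rightarrow> ('m \<times> ('s \<Rightarrow> bool \<times> 's)) set \<Rightarrow> nat \<Rightarrow> 's \<Rightarrow> 's outcome" where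
  "step x H i t =
    (if i < 1 \<or> length x < i then Stuck else
     (case x ! (i - 1) of
        Basic m \<Rightarrow> if m \<in> IF H then Cont (i + 1) (snd (meth H m t)) else Stuck
      | PosTest m \<Rightarrow> if m \<in> IF H then
           (if fst (meth H m t) then Cont (i + 1) (snd (meth H m t))
            else Cont (i + 2) (snd (meth H m t))) else Stuck
      | NegTest m \<Rightarrow> if m \<in> IF H then
           (if fst (meth H m t) then Cont (i + 2) (snd (meth H m t))
            else Cont (i + 1) (snd (meth H m t))) else Stuck
      | FJump l \<Rightarrow> Cont (i + l) t
      | BJump l \<Rightarrow> Cont (i - l) t
      | TermT \<Rightarrow> Done True t
      | TermF \<Rightarrow> Done False t))"

fun run :: "'m instr list \<Rightarrow> ('m \<times> ('s \<Rightarrow> bool \<times> 's)) set \<Rightarrow> 's \<Rightarrow> nat \<Rightarrow> 's outcome" where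
  "run x H s 0 = Cont 1 s"
| "run x H s (Suc n) = (case run x H s n of Cont i t \<Rightarrow> step x H i t | r \<Rightarrow> r)"

definition converges :: "'m instr list \<Rightarrow> ('m \<times> ('s \<Rightarrow> bool \<times> 's)) set \<Rightarrow> 's \<Rightarrow> bool" where
  "converges x H s \<longleftrightarrow> (\<exists>n b t. run x H s n = Done b t)"

definition diverges :: "'m instr list \<Rightarrow> ('m \<times> ('s \<Rightarrow> bool \<times> 's)) set \<Rightarrow> 's \<Rightarrow> bool" where
  "diverges x H s \<longleftrightarrow> \<not> converges x H s"

datatype reply = RT | RF | RD

definition rep :: "'m instr list \<Rightarrow> ('m \<times> ('s \<Rightarrow> bool \<times> 's)) set \<Rightarrow> 's \<Rightarrow> reply" where
  "rep x H s = (if converges x H s then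
       (if (THE b. \<exists>n t. run x H s n = Done b t) then RT else RF) else RD)"

definition fin :: "'m instr list \<Rightarrow> ('m \<times> ('s \<Rightarrow> bool \<times> 's)) set \<Rightarrow> 's \<Rightarrow> 's" where
  "fin x H s = (THE t. \<exists>n b. run x H s n = Done b t)"

datatype sym = Zero | One | Colon

text \<open>v \<triangleright> w is the pair (v, w); \<triangleright> w is ([], w).\<close>
type_synonym tape = "sym list \<times> sym list"

definition Dup :: "tape \<Rightarrow> bool \<times> tape" where
  "Dup st = (let u = fst st @ snd st;
                 v = takeWhile (\<lambda>c. c \<noteq> Colon) u;
                 w = dropWhile (\<lambda>c. c \<noteq> Colon) u
             in (True, ([], v @ [Colon] @ v @ w)))"

text \<open>enc is the fixed injective encoding of L_f(IF H) into {0,1}*.\<close>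
definition interpreter ::
  "('m \<times> (tape \<Rightarrow> bool \<times> tape)) set \<Rightarrow> ('m instr list \<Rightarrow> sym list)
     \<Rightarrow> 'm set \<Rightarrow> 'm set \<Rightarrow> 'm instr list \<Rightarrow> bool" where
  "interpreter H enc I I' x \<longleftrightarrow> I \<subseteq> IF H \<and> I' \<subseteq> I \<and> x \<in> Lf I \<and>
     (\<forall>y \<in> Lf I'. \<forall>v :: sym list. converges y H ([], v) \<longrightarrow>
        converges x H ([], enc y @ [Colon] @ v) \<and>
        fin x H ([], enc y @ [Colon] @ v) = fin y H ([], v) \<and>
        rep x H ([], enc y @ [Colon] @ v) = rep y H ([], v))"

definition reflexive_interpreter ::
  "('m \<times> (tape \<Rightarrow> bool \<times> tape)) set \<Rightarrow> ('m instr list \<Rightarrow> sym list)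
     \<Rightarrow> 'm set \<Rightarrow> 'm set \<Rightarrow> 'm instr list \<Rightarrow> bool" where
  "reflexive_interpreter H enc I I' x \<longleftrightarrow> interpreter H enc I I' x \<and> x \<in> Lf I'"

end

theory Submission
  imports Defs
begin

text \<open>
  The proof is a diagonal argument. Given a program x, its negation
  \<open>negation d x = f.d ; x'\<close> first applies the method d and then runs x with the
  termination instructions !t and !f exchanged (all positions shift by one,
  which relative jumps do not notice). If x converges from the state reached
  after the first step, then the negation converges as well and gives the
  opposite reply.
  Now let x be a reflexive interpreter that converges on every input of the form
  \<open>\<triangleright> enc y : v\<close>, and let z be the negation of x with d = dup. Since enc z is
  a bit string, Dup turns \<open>\<triangleright> enc z\<close> into \<open>\<triangleright> enc z : enc z\<close>, so z run on
  \<open>\<triangleright> enc z\<close> answers the opposite of x run on \<open>\<triangleright> enc z : enc z\<close>; but x, being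
  an interpreter for z, must give the same answer -- a contradiction.
\<close>

lemma run_Done_persist: "run x H s n = Done b t \<Longrightarrow> run x H s (n + k) = Done b t"
  by (induction k) auto

lemma run_Stuck_persist: "run x H s n = Stuck \<Longrightarrow> run x H s (n + k) = Stuck"
  by (induction k) auto

lemma run_Done_unique:
  assumes "run x H s n = Done b t" and "run x H s m = Done b' t'"
  shows "b = b' \<and> t = t'"
proof -
  have "run x H s (n + m) = Done b t" using run_Done_persist[OF assms(1)] .
  moreover have "run x H s (m + n) = Done b' t'" using run_Done_persist[OF assms(2)] .
  ultimately show ?thesis by (simp add: add.commute)
qed

lemma rep_of_Done:
  assumes run: "run x H s n = Done b t"
  shows "rep x H s = (if b then RT else RF)"
proof -
  have "converges x H s" using run unfolding converges_def by blast
  moreover have "(THE b. \<exists>n t. run x H s n = Done b t) = b"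
  proof (rule the_equality)
    show "\<exists>n t. run x H s n = Done b t" using run by blast
  next
    fix b' assume "\<exists>n t. run x H s n = Done b' t"
    then show "b' = b" using run run_Done_unique by metis
  qed
  ultimately show ?thesis unfolding rep_def by simp
qed

lemma converges_run_live:
  assumes "converges x H s"
  shows "run x H s n \<noteq> Stuck" and "run x H s n \<noteq> Cont 0 t"
proof -
  obtain N b t' where N: "run x H s N = Done b t'"
    using assms unfolding converges_def by blast
  have never_stuck: "run x H s m \<noteq> Stuck" for m
  proof
    assume "run x H s m = Stuck"
    then have "run x H s (m + N) = Stuck" by (rule run_Stuck_persist)
    moreover have "run x H s (N + m) = Done b t'" using run_Done_persist[OF N] .
    ultimately show False by (simp add: add.commute)
  qed
  then show "run x H s n \<noteq> Stuck" .
  show "run x H s n \<noteq> Cont 0 t"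
  proof
    assume "run x H s n = Cont 0 t"
    then have "run x H s (Suc n) = Stuck" by (simp add: step_def)
    with never_stuck show False by blast
  qed
qed

fun flip_term :: "'m instr \<Rightarrow> 'm instr" where
  "flip_term TermT = TermF"
| "flip_term TermF = TermT"
| "flip_term u = u"

lemma instr_methods_flip_term: "instr_methods (flip_term u) = instr_methods u"
  by (cases u) auto

definition negation :: "'m \<Rightarrow> 'm instr list \<Rightarrow> 'm instr list" where
  "negation d x = Basic d # map flip_term x"

lemma negation_in_Lf: "x \<in> Lf I \<Longrightarrow> d \<in> I \<Longrightarrow> negation d x \<in> Lf I"
  unfolding negation_def Lf_def by (auto simp: instr_methods_flip_term)

text \<open>How an outcome of x appears in the negation: one position later,
  with the opposite termination value.\<close>
fun shift_flip :: "'s outcome \<Rightarrow> 's outcome" where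
  "shift_flip (Cont i t) = Cont (Suc i) t"
| "shift_flip (Done b t) = Done (\<not> b) t"
| "shift_flip Stuck = Stuck"

lemma step_negation:
  assumes "step x H i t \<noteq> Stuck" and "\<forall>t'. step x H i t \<noteq> Cont 0 t'"
  shows "step (negation d x) H (Suc i) t = shift_flip (step x H i t)"
proof -
  have i: "1 \<le> i" "i \<le> length x"
    using assms(1) unfolding step_def by (auto split: if_splits)
  moreover have "length (negation d x) = Suc (length x)"
    unfolding negation_def by simp
  moreover have "negation d x ! i = flip_term (x ! (i - 1))"
    using i unfolding negation_def by (cases i) auto
  ultimately show ?thesis
    using assms unfolding step_def by (cases "x ! (i - 1)") (auto split: if_splits)
qed

lemma run_negation:
  assumes conv: "converges x H s1"
    and first: "step (negation d x) H 1 s0 = Cont 2 s1"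
  shows "run (negation d x) H s0 (Suc n) = shift_flip (run x H s1 n)"
proof (induction n)
  case 0
  then show ?case using first by (simp add: numeral_2_eq_2)
next
  case (Suc n)
  show ?case
  proof (cases "run x H s1 n")
    case (Cont i t)
    have "run x H s1 (Suc n) = step x H i t" using Cont by simp
    then have "step x H i t \<noteq> Stuck" "\<forall>t'. step x H i t \<noteq> Cont 0 t'"
      using converges_run_live[OF conv] by metis+
    then show ?thesis using Suc Cont step_negation by simp
  next
    case (Done b t)
    then show ?thesis using Suc by simp
  next
    case Stuck
    then show ?thesis using converges_run_live(1)[OF conv] by blast
  qed
qed

lemma negation_opposite_reply:
  assumes conv: "converges x H s1"
    and first: "step (negation d x) H 1 s0 = Cont 2 s1"
  shows "converges (negation d x) H s0"
    and "rep (negation d x) H s0 = RT \<longleftrightarrow> rep x H s1 = RF"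
proof -
  obtain N b t where N: "run x H s1 N = Done b t"
    using conv unfolding converges_def by blast
  have run_neg: "run (negation d x) H s0 (Suc N) = Done (\<not> b) t"
    using run_negation[OF conv first, of N] N by simp
  then show "converges (negation d x) H s0" unfolding converges_def by blast
  show "rep (negation d x) H s0 = RT \<longleftrightarrow> rep x H s1 = RF"
    using rep_of_Done[OF run_neg] rep_of_Done[OF N] by simp
qed

lemma meth_of_member:
  assumes "functional_unit H" and "(m, M) \<in> H"
  shows "meth H m = M"
  using assms unfolding functional_unit_def meth_def by blast

lemma Dup_bits:
  assumes "set v \<subseteq> {Zero, One}"
  shows "Dup ([], v) = (True, ([], v @ [Colon] @ v))"
proof -
  have "\<forall>c \<in> set v. c \<noteq> Colon" using assms by auto
  then show ?thesis unfolding Dup_def Let_def by simp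
qed

lemma negation_first_step_Dup:
  assumes "functional_unit H" and "(d, Dup) \<in> H" and "set v \<subseteq> {Zero, One}"
  shows "step (negation d x) H 1 ([], v) = Cont 2 ([], v @ [Colon] @ v)"
proof -
  have "d \<in> IF H" using assms(2) unfolding IF_def by force
  then show ?thesis
    using meth_of_member[OF assms(1,2)] Dup_bits[OF assms(3)]
    unfolding step_def negation_def by simp
qed

theorem theorem1:
  fixes H :: "('m \<times> (tape \<Rightarrow> bool \<times> tape)) set"
    and dup :: 'm
    and I :: "'m set"
    and enc :: "'m instr list \<Rightarrow> sym list"
    and x :: "'m instr list"
  assumes "functional_unit H"
    and "(dup, Dup) \<in> H"
    and "I \<subseteq> IF H"
    and "dup \<in> I"
    and "inj_on enc (Lf (IF H))"
    and "\<forall>y \<in> Lf (IF H). set (enc y) \<subseteq> {Zero, One}"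
    and "reflexive_interpreter H enc (IF H) I x"
  shows "\<exists>y \<in> Lf I. \<exists>v :: sym list. diverges x H ([], enc y @ [Colon] @ v)"
proof (rule ccontr)
  assume "\<not> ?thesis"
  then have total: "converges x H ([], enc y @ [Colon] @ v)" if "y \<in> Lf I" for y v
    using that unfolding diverges_def by blast
  have x_interp: "interpreter H enc (IF H) I x" and "x \<in> Lf I"
    using assms(7) unfolding reflexive_interpreter_def by auto
  define z where "z = negation dup x"
  have zI: "z \<in> Lf I"
    unfolding z_def by (rule negation_in_Lf) fact+
  then have "set (enc z) \<subseteq> {Zero, One}" using assms(3,6) unfolding Lf_def by blast
  then have first: "step (negation dup x) H 1 ([], enc z) = Cont 2 ([], enc z @ [Colon] @ enc z)"
    by (rule negation_first_step_Dup[OF assms(1,2)])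
  have x_on_z: "converges x H ([], enc z @ [Colon] @ enc z)"
    using total[OF zI] .
  note z_opposite = negation_opposite_reply[OF x_on_z first, folded z_def]
  have "rep x H ([], enc z @ [Colon] @ enc z) = rep z H ([], enc z)"
    using x_interp zI z_opposite(1) unfolding interpreter_def by (auto dest: bspec[of _ _ z])
  moreover have "rep x H ([], enc z @ [Colon] @ enc z) \<noteq> RD"
    using x_on_z unfolding rep_def by simp
  ultimately show False
    using z_opposite(2) by (cases "rep z H ([], enc z)") auto
qed

end
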